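(* Let $N=(V,M,E_V,E_M,\mathcal K)$ be a GRN, $P,Q$ assertions and $p$ a path program of $N$. Assume that every loop invariant in $p$ is a weakest one, in the sense that for every $while$ statement $w=(while~e~with~I~do~p')$ occurring in $p$ and all assertions $P',Q'$ such that $\{P'\}w\{Q'\}$ is satisfied, every state satisfying $P'$ satisfies $I$. If the Hoare triple $\{P\}p\{Q\}$ is satisfied, then $P\Rightarrow \mathrm{wp}(p,Q)$ is satisfied by every state of $N$, where $\mathrm{wp}(p,Q)$ is the precondition computed by the backward strategy (i.e. the precondition obtained just before the final application of the Empty program rule).
   Context: Gene regulatory network with multiplexes (GRN): a tuple $N=(V,M,E_V,E_M,\mathcal K)$ where $V$ (variables) and $M$ (multiplexes) are disjoint finite sets; $(V\cup M,E_V\cup E_M)$ is a directed graph whose edges in $E_V$ go from a variable to a multiplex and whose edges in $E_M$ go from a multiplex to a variable or a multiplex, and every directed cycle contains at least one variable; each variable $v$ has a positive integer bound $b_v$; each multiplex $m$ is labelled by a formula $\varphi_m$ built with $\neg,\wedge,\vee$ from atoms $v\ge s$ (where $v\to m\in E_V$ and $s\in\{1,\dots,b_v\}$) and atoms $m'$ (where $m'\to m\in E_M$). For $v\in V$, $N^{-1}(v)$ is the set of multiplexes $m$ with $m\to v\in E_M$. $\mathcal K=\{K_{v,\omega}\}$ is a family of integers indexed by $v\in V$ and $\omega\subseteq N^{-1}(v)$ with $0\le K_{v,\omega}\le b_v$. The flattened formula $\overline{\varphi_m}$ is obtained by repeatedly replacing each multiplex atom $m'$ by $\varphi_{m'}$.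 States: a state is a map $\eta:V\to\mathbb N$ with $\eta(v)\le b_v$; $S$ is the set of states. $\eta\models v\ge s$ iff $\eta(v)\ge s$, extended to connectives as usual. Resources: $\rho(\eta,v)=\{m\in N^{-1}(v):\eta\models\overline{\varphi_m}\}$. $\eta[v\leftarrow k]$ is $\eta$ with $v$ set to $k$. State graph: transition $\eta\to\eta'$ iff either $\eta(v)=K_{v,\rho(\eta,v)}$ for all $v$ and $\eta'=\eta$, or there is $v$ with $\eta(v)\ne K_{v,\rho(\eta,v)}$ and $\eta'=\eta[v\leftarrow\eta(v)\pm1]$, with $+1$ if $\eta(v)<K_{v,\rho(\eta,v)}$ and $-1$ if $\eta(v)>K_{v,\rho(\eta,v)}$. Assertion language: terms are integers, variable symbols $v$, symbols $K_{v,\omega}$, $(t+t')$, $(t-t')$; atoms $t=t'$, $t<t'$, $t>t'$, $t\le t'$, $t\ge t'$; closed under $\neg,\wedge,\vee,\Rightarrow$. $\eta\models_N\varphi$ iff $\varphi$ holds in $\mathbb Z$ after replacing $v$ by $\eta(v)$ and $K_{v,\omega}$ by its value. $Q[v\leftarrow t]$ is substitution of $t$ for $v$. Path programs: generated by $v+$, $v-$, $v:=n$, $assert(e)$, $(p_1;p_2)$ (associative), $(if~e~then~p_1~else~p_2)$, $(while~e~with~I~do~p)$, $\forall(p_1,p_2)$, $\exists(p_1,p_2)$; plus the empty program $\varepsilon$. Semantics: $\leadsto_p\subseteq S\times\mathcal P(S)$ is the smallest relation such that for every $\eta$: (1) for $p=v+$ (resp. $v-$) with $\eta'=\eta[v\leftarrow\eta(v)+1]$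 (resp. $-1$), if $\eta\to\eta'$ is a transition then $\eta\leadsto_p\{\eta'\}$; (2) $\eta\leadsto_{v:=k}\{\eta[v\leftarrow k]\}$; (3) if $\eta\models_N e$ then $\eta\leadsto_{assert(e)}\{\eta\}$; (4) if $\eta\leadsto_{p_1}E_1$ and $\eta\leadsto_{p_2}E_2$ then $\eta\leadsto_{\forall(p_1,p_2)}E_1\cup E_2$; (5) if $\eta\leadsto_{p_i}E$ for some $i\in\{1,2\}$ then $\eta\leadsto_{\exists(p_1,p_2)}E$; (6) if $\eta\leadsto_{p_1}F$ and $(E_e)_{e\in F}$ satisfies $e\leadsto_{p_2}E_e$ for all $e\in F$, then $\eta\leadsto_{p_1;p_2}\bigcup_{e\in F}E_e$; (7) if $\eta\models_N e$ and $\eta\leadsto_{p_1}E$, or $\eta\not\models_N e$ and $\eta\leadsto_{p_2}E$, then $\eta\leadsto_{if~e~then~p_1~else~p_2}E$; (8) for $w=while~e~with~I~do~p_0$: if $\eta\models_N e$ and $\eta\leadsto_{p_0;w}E$ then $\eta\leadsto_wE$; if $\eta\not\models_N e$ then $\eta\leadsto_w\{\eta\}$; (9) $\eta\leadsto_\varepsilon\{\eta\}$. A Hoare triple $\{P\}p\{Q\}$ is satisfied iff for every $\eta\models_N P$ there is $E$ with $\eta\leadsto_pE$ and every $\eta'\in E$ satisfies $Q$. Formulas: $\Phi_v^\omega=\bigwedge_{m\in\omega}\overline{\varphi_m}\wedge\bigwedge_{m\in N^{-1}(v)\setminus\omega}\neg\overline{\varphi_m}$; $\Phi_v^+=\bigwedge_{\omega\subseteq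 N^{-1}(v)}(\Phi_v^\omega\Rightarrow K_{v,\omega}>v)$; $\Phi_v^-=\bigwedge_{\omega\subseteq N^{-1}(v)}(\Phi_v^\omega\Rightarrow K_{v,\omega}<v)$. Backward strategy (weakest precondition computation, following the inference rules of the modified Hoare logic backward from the postcondition): $\mathrm{wp}(v+,Q)=\Phi_v^+\wedge Q[v\leftarrow v+1]$; $\mathrm{wp}(v-,Q)=\Phi_v^-\wedge Q[v\leftarrow v-1]$; $\mathrm{wp}(assert(e),Q)=e\wedge Q$; $\mathrm{wp}(v:=k,Q)=Q[v\leftarrow k]$; $\mathrm{wp}(\forall(p_1,p_2),Q)=\mathrm{wp}(p_1,Q)\wedge\mathrm{wp}(p_2,Q)$; $\mathrm{wp}(\exists(p_1,p_2),Q)=\mathrm{wp}(p_1,Q)\vee\mathrm{wp}(p_2,Q)$; $\mathrm{wp}(p_1;p_2,Q)=\mathrm{wp}(p_1,\mathrm{wp}(p_2,Q))$; $\mathrm{wp}(if~e~then~p_1~else~p_2,Q)=(e\wedge\mathrm{wp}(p_1,Q))\vee(\neg e\wedge\mathrm{wp}(p_2,Q))$; $\mathrm{wp}(while~e~with~I~do~p',Q)=I$ (the loop being handled by separate sub-proofs of $\neg e\wedge I\Rightarrow Q$ and $\{e\wedge I\}p'\{I\}$); $\mathrm{wp}(\varepsilon,Q)=Q$. *)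

theory Defs
  imports Main
begin

datatype ('v, 'm) mform =
    MGe 'v nat
  | MAt 'm
  | MNot "('v, 'm) mform"
  | MAnd "('v, 'm) mform" "('v, 'm) mform"
  | MOr "('v, 'm) mform" "('v, 'm) mform"

text \<open>A GRN. Variables and multiplexes live in distinct types, hence are disjoint.
  Edges: EV (variable to multiplex), EMV (multiplex to variable), EMM (multiplex to multiplex).\<close>
record ('v, 'm) grn =
  Vars :: "'v set"
  Mults :: "'m set"
  EV :: "('v \<times> 'm) set"
  EMV :: "('m \<times> 'v) set"
  EMM :: "('m \<times> 'm) set"
  bnd :: "'v \<Rightarrow> nat"
  phi :: "'m \<Rightarrow> ('v, 'm) mform"
  Kp :: "'v \<Rightarrow> 'm set \<Rightarrow> nat"

definition Ninv :: "('v, 'm) grn \<Rightarrow> 'v \<Rightarrow> 'm set" where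
  "Ninv N v = {m. (m, v) \<in> EMV N}"

fun wf_mform :: "('v, 'm) grn \<Rightarrow> 'm \<Rightarrow> ('v, 'm) mform \<Rightarrow> bool" where
  "wf_mform N m (MGe v s) = ((v, m) \<in> EV N \<and> 1 \<le> s \<and> s \<le> bnd N v)"
| "wf_mform N m (MAt m') = ((m', m) \<in> EMM N)"
| "wf_mform N m (MNot f) = wf_mform N m f"
| "wf_mform N m (MAnd f g) = (wf_mform N m f \<and> wf_mform N m g)"
| "wf_mform N m (MOr f g) = (wf_mform N m f \<and> wf_mform N m g)"

text \<open>Every directed cycle contains a variable iff the multiplex-to-multiplex edge relation
  is acyclic.\<close>
definition is_grn :: "('v, 'm) grn \<Rightarrow> bool" where
  "is_grn N \<longleftrightarrow>
     finite (Vars N) \<and> finite (Mults N) \<and>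
     EV N \<subseteq> Vars N \<times> Mults N \<and> EMV N \<subseteq> Mults N \<times> Vars N \<and> EMM N \<subseteq> Mults N \<times> Mults N \<and>
     acyclic (EMM N) \<and>
     (\<forall>v \<in> Vars N. bnd N v > 0) \<and>
     (\<forall>m \<in> Mults N. wf_mform N m (phi N m)) \<and>
     (\<forall>v \<in> Vars N. \<forall>\<omega>. \<omega> \<subseteq> Ninv N v \<longrightarrow> Kp N v \<omega> \<le> bnd N v)"

text \<open>Flattening: repeatedly replace multiplex atoms by their formulas. Since the multiplex
  graph is acyclic and finite, card (Mults N) rounds of replacement suffice.\<close>
fun flat :: "nat \<Rightarrow> ('m \<Rightarrow> ('v, 'm) mform) \<Rightarrow> ('v, 'm) mform \<Rightarrow> ('v, 'm) mform" where
  "flat n f (MGe v s) = MGe v s"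
| "flat 0 f (MAt m) = MAt m"
| "flat (Suc n) f (MAt m) = flat n f (f m)"
| "flat n f (MNot g) = MNot (flat n f g)"
| "flat n f (MAnd g h) = MAnd (flat n f g) (flat n f h)"
| "flat n f (MOr g h) = MOr (flat n f g) (flat n f h)"

definition flatphi :: "('v, 'm) grn \<Rightarrow> 'm \<Rightarrow> ('v, 'm) mform" where
  "flatphi N m = flat (card (Mults N)) (phi N) (phi N m)"

text \<open>Valuations map variables to integers (states are special valuations).
  A flattened formula contains no multiplex atoms; they are interpreted as False.\<close>
type_synonym 'v val = "'v \<Rightarrow> int"

fun msat :: "'v val \<Rightarrow> ('v, 'm) mform \<Rightarrow> bool" where
  "msat \<sigma> (MGe v s) = (\<sigma> v \<ge> int s)"
| "msat \<sigma> (MAt m) = False"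
| "msat \<sigma> (MNot f) = (\<not> msat \<sigma> f)"
| "msat \<sigma> (MAnd f g) = (msat \<sigma> f \<and> msat \<sigma> g)"
| "msat \<sigma> (MOr f g) = (msat \<sigma> f \<or> msat \<sigma> g)"

definition fsat :: "('v, 'm) grn \<Rightarrow> 'v val \<Rightarrow> 'm \<Rightarrow> bool" where
  "fsat N \<sigma> m = msat \<sigma> (flatphi N m)"

text \<open>States: values within bounds on V (and 0 outside V, as a normalisation).\<close>
definition States :: "('v, 'm) grn \<Rightarrow> 'v val set" where
  "States N = {\<eta>. \<forall>v. (v \<in> Vars N \<longrightarrow> 0 \<le> \<eta> v \<and> \<eta> v \<le> int (bnd N v)) \<and>
                      (v \<notin> Vars N \<longrightarrow> \<eta> v = 0)}"

definition rho :: "('v, 'm) grn \<Rightarrow> 'v val \<Rightarrow> 'v \<Rightarrow> 'm set" where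
  "rho N \<eta> v = {m \<in> Ninv N v. fsat N \<eta> m}"

definition Kval :: "('v, 'm) grn \<Rightarrow> 'v val \<Rightarrow> 'v \<Rightarrow> int" where
  "Kval N \<eta> v = int (Kp N v (rho N \<eta> v))"

definition transition :: "('v, 'm) grn \<Rightarrow> 'v val \<Rightarrow> 'v val \<Rightarrow> bool" where
  "transition N \<eta> \<eta>' \<longleftrightarrow> \<eta> \<in> States N \<and>
     ((\<forall>v \<in> Vars N. \<eta> v = Kval N \<eta> v) \<and> \<eta>' = \<eta> \<or>
      (\<exists>v \<in> Vars N. \<eta> v \<noteq> Kval N \<eta> v \<and>
         \<eta>' = \<eta>(v := (if \<eta> v < Kval N \<eta> v then \<eta> v + 1 else \<eta> v - 1))))"

datatype ('v, 'm) aterm =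
    Num int
  | Var 'v
  | KSym 'v "'m set"
  | Plus "('v, 'm) aterm" "('v, 'm) aterm"
  | Minus "('v, 'm) aterm" "('v, 'm) aterm"

datatype ('v, 'm) assn =
    AEq "('v, 'm) aterm" "('v, 'm) aterm"
  | ALt "('v, 'm) aterm" "('v, 'm) aterm"
  | AGt "('v, 'm) aterm" "('v, 'm) aterm"
  | ALe "('v, 'm) aterm" "('v, 'm) aterm"
  | AGe "('v, 'm) aterm" "('v, 'm) aterm"
  | ANot "('v, 'm) assn"
  | AAnd "('v, 'm) assn" "('v, 'm) assn"
  | AOr "('v, 'm) assn" "('v, 'm) assn"
  | AImp "('v, 'm) assn" "('v, 'm) assn"

fun evalT :: "('v, 'm) grn \<Rightarrow> 'v val \<Rightarrow> ('v, 'm) aterm \<Rightarrow> int" where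
  "evalT N \<sigma> (Num n) = n"
| "evalT N \<sigma> (Var v) = \<sigma> v"
| "evalT N \<sigma> (KSym v \<omega>) = int (Kp N v \<omega>)"
| "evalT N \<sigma> (Plus t u) = evalT N \<sigma> t + evalT N \<sigma> u"
| "evalT N \<sigma> (Minus t u) = evalT N \<sigma> t - evalT N \<sigma> u"

fun evalA :: "('v, 'm) grn \<Rightarrow> 'v val \<Rightarrow> ('v, 'm) assn \<Rightarrow> bool" where
  "evalA N \<sigma> (AEq t u) = (evalT N \<sigma> t = evalT N \<sigma> u)"
| "evalA N \<sigma> (ALt t u) = (evalT N \<sigma> t < evalT N \<sigma> u)"
| "evalA N \<sigma> (AGt t u) = (evalT N \<sigma> t > evalT N \<sigma> u)"
| "evalA N \<sigma> (ALe t u) = (evalT N \<sigma> t \<le> evalT N \<sigma> u)"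
| "evalA N \<sigma> (AGe t u) = (evalT N \<sigma> t \<ge> evalT N \<sigma> u)"
| "evalA N \<sigma> (ANot a) = (\<not> evalA N \<sigma> a)"
| "evalA N \<sigma> (AAnd a b) = (evalA N \<sigma> a \<and> evalA N \<sigma> b)"
| "evalA N \<sigma> (AOr a b) = (evalA N \<sigma> a \<or> evalA N \<sigma> b)"
| "evalA N \<sigma> (AImp a b) = (evalA N \<sigma> a \<longrightarrow> evalA N \<sigma> b)"

fun wfT :: "('v, 'm) grn \<Rightarrow> ('v, 'm) aterm \<Rightarrow> bool" where
  "wfT N (Num n) = True"
| "wfT N (Var v) = (v \<in> Vars N)"
| "wfT N (KSym v \<omega>) = (v \<in> Vars N \<and> \<omega> \<subseteq> Ninv N v)"
| "wfT N (Plus t u) = (wfT N t \<and> wfT N u)"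
| "wfT N (Minus t u) = (wfT N t \<and> wfT N u)"

fun wfA :: "('v, 'm) grn \<Rightarrow> ('v, 'm) assn \<Rightarrow> bool" where
  "wfA N (AEq t u) = (wfT N t \<and> wfT N u)"
| "wfA N (ALt t u) = (wfT N t \<and> wfT N u)"
| "wfA N (AGt t u) = (wfT N t \<and> wfT N u)"
| "wfA N (ALe t u) = (wfT N t \<and> wfT N u)"
| "wfA N (AGe t u) = (wfT N t \<and> wfT N u)"
| "wfA N (ANot a) = wfA N a"
| "wfA N (AAnd a b) = (wfA N a \<and> wfA N b)"
| "wfA N (AOr a b) = (wfA N a \<and> wfA N b)"
| "wfA N (AImp a b) = (wfA N a \<and> wfA N b)"

datatype ('v, 'm) prog =
    Inc 'v
  | Dec 'v
  | Assign 'v nat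
  | Assert "('v, 'm) assn"
  | Seq "('v, 'm) prog" "('v, 'm) prog"
  | If "('v, 'm) assn" "('v, 'm) prog" "('v, 'm) prog"
  | While "('v, 'm) assn" "('v, 'm) assn" "('v, 'm) prog"  (* while e with I do p *)
  | All "('v, 'm) prog" "('v, 'm) prog"
  | Ex "('v, 'm) prog" "('v, 'm) prog"
  | Skip

fun wf_prog :: "('v, 'm) grn \<Rightarrow> ('v, 'm) prog \<Rightarrow> bool" where
  "wf_prog N (Inc v) = (v \<in> Vars N)"
| "wf_prog N (Dec v) = (v \<in> Vars N)"
| "wf_prog N (Assign v k) = (v \<in> Vars N)"
| "wf_prog N (Assert e) = wfA N e"
| "wf_prog N (Seq p q) = (wf_prog N p \<and> wf_prog N q)"
| "wf_prog N (If e p q) = (wfA N e \<and> wf_prog N p \<and> wf_prog N q)"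
| "wf_prog N (While e I p) = (wfA N e \<and> wfA N I \<and> wf_prog N p)"
| "wf_prog N (All p q) = (wf_prog N p \<and> wf_prog N q)"
| "wf_prog N (Ex p q) = (wf_prog N p \<and> wf_prog N q)"
| "wf_prog N Skip = True"

fun subprogs :: "('v, 'm) prog \<Rightarrow> ('v, 'm) prog set" where
  "subprogs (Seq p q) = insert (Seq p q) (subprogs p \<union> subprogs q)"
| "subprogs (If e p q) = insert (If e p q) (subprogs p \<union> subprogs q)"
| "subprogs (While e I p) = insert (While e I p) (subprogs p)"
| "subprogs (All p q) = insert (All p q) (subprogs p \<union> subprogs q)"
| "subprogs (Ex p q) = insert (Ex p q) (subprogs p \<union> subprogs q)"
| "subprogs p = {p}"

inductive steps :: "('v, 'm) grn \<Rightarrow> 'v val \<Rightarrow> ('v, 'm) prog \<Rightarrow> 'v val set \<Rightarrow> bool"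
  for N :: "('v, 'm) grn" where
  inc: "\<eta> \<in> States N \<Longrightarrow> transition N \<eta> (\<eta>(v := \<eta> v + 1)) \<Longrightarrow>
        steps N \<eta> (Inc v) {\<eta>(v := \<eta> v + 1)}"
| dec: "\<eta> \<in> States N \<Longrightarrow> transition N \<eta> (\<eta>(v := \<eta> v - 1)) \<Longrightarrow>
        steps N \<eta> (Dec v) {\<eta>(v := \<eta> v - 1)}"
| assign: "\<eta> \<in> States N \<Longrightarrow> \<eta>(v := int k) \<in> States N \<Longrightarrow>
        steps N \<eta> (Assign v k) {\<eta>(v := int k)}"
| assert: "\<eta> \<in> States N \<Longrightarrow> evalA N \<eta> e \<Longrightarrow> steps N \<eta> (Assert e) {\<eta>}"
| all: "steps N \<eta> p1 E1 \<Longrightarrow> steps N \<eta> p2 E2 \<Longrightarrow> steps N \<eta> (All p1 p2) (E1 \<union> E2)"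
| ex1: "steps N \<eta> p1 E \<Longrightarrow> steps N \<eta> (Ex p1 p2) E"
| ex2: "steps N \<eta> p2 E \<Longrightarrow> steps N \<eta> (Ex p1 p2) E"
| seq: "steps N \<eta> p1 F \<Longrightarrow> (\<forall>e \<in> F. steps N e p2 (Ef e)) \<Longrightarrow>
        steps N \<eta> (Seq p1 p2) (\<Union>e \<in> F. Ef e)"
| if_true: "\<eta> \<in> States N \<Longrightarrow> evalA N \<eta> e \<Longrightarrow> steps N \<eta> p1 E \<Longrightarrow> steps N \<eta> (If e p1 p2) E"
| if_false: "\<eta> \<in> States N \<Longrightarrow> \<not> evalA N \<eta> e \<Longrightarrow> steps N \<eta> p2 E \<Longrightarrow> steps N \<eta> (If e p1 p2) E"
| while_true: "\<eta> \<in> States N \<Longrightarrow> evalA N \<eta> e \<Longrightarrow> steps N \<eta> (Seq p0 (While e I p0)) E \<Longrightarrow>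
        steps N \<eta> (While e I p0) E"
| while_false: "\<eta> \<in> States N \<Longrightarrow> \<not> evalA N \<eta> e \<Longrightarrow> steps N \<eta> (While e I p0) {\<eta>}"
| skip: "\<eta> \<in> States N \<Longrightarrow> steps N \<eta> Skip {\<eta>}"

definition hoare :: "('v, 'm) grn \<Rightarrow> ('v, 'm) assn \<Rightarrow> ('v, 'm) prog \<Rightarrow> ('v, 'm) assn \<Rightarrow> bool" where
  "hoare N P p Q \<longleftrightarrow>
     (\<forall>\<eta> \<in> States N. evalA N \<eta> P \<longrightarrow> (\<exists>E. steps N \<eta> p E \<and> (\<forall>\<eta>' \<in> E. evalA N \<eta>' Q)))"

definition PhiOmega :: "('v, 'm) grn \<Rightarrow> 'v \<Rightarrow> 'm set \<Rightarrow> 'v val \<Rightarrow> bool" where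
  "PhiOmega N v \<omega> \<sigma> \<longleftrightarrow> (\<forall>m \<in> \<omega>. fsat N \<sigma> m) \<and> (\<forall>m \<in> Ninv N v - \<omega>. \<not> fsat N \<sigma> m)"

definition PhiPlus :: "('v, 'm) grn \<Rightarrow> 'v \<Rightarrow> 'v val \<Rightarrow> bool" where
  "PhiPlus N v \<sigma> \<longleftrightarrow> (\<forall>\<omega>. \<omega> \<subseteq> Ninv N v \<longrightarrow> PhiOmega N v \<omega> \<sigma> \<longrightarrow> int (Kp N v \<omega>) > \<sigma> v)"

definition PhiMinus :: "('v, 'm) grn \<Rightarrow> 'v \<Rightarrow> 'v val \<Rightarrow> bool" where
  "PhiMinus N v \<sigma> \<longleftrightarrow> (\<forall>\<omega>. \<omega> \<subseteq> Ninv N v \<longrightarrow> PhiOmega N v \<omega> \<sigma> \<longrightarrow> int (Kp N v \<omega>) < \<sigma> v)"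

text \<open>Substitution Q[v <- t] is rendered semantically by updating the valuation.\<close>
fun wp :: "('v, 'm) grn \<Rightarrow> ('v, 'm) prog \<Rightarrow> ('v val \<Rightarrow> bool) \<Rightarrow> 'v val \<Rightarrow> bool" where
  "wp N (Inc v) Q = (\<lambda>\<sigma>. PhiPlus N v \<sigma> \<and> Q (\<sigma>(v := \<sigma> v + 1)))"
| "wp N (Dec v) Q = (\<lambda>\<sigma>. PhiMinus N v \<sigma> \<and> Q (\<sigma>(v := \<sigma> v - 1)))"
| "wp N (Assert e) Q = (\<lambda>\<sigma>. evalA N \<sigma> e \<and> Q \<sigma>)"
| "wp N (Assign v k) Q = (\<lambda>\<sigma>. Q (\<sigma>(v := int k)))"
| "wp N (All p1 p2) Q = (\<lambda>\<sigma>. wp N p1 Q \<sigma> \<and> wp N p2 Q \<sigma>)"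
| "wp N (Ex p1 p2) Q = (\<lambda>\<sigma>. wp N p1 Q \<sigma> \<or> wp N p2 Q \<sigma>)"
| "wp N (Seq p1 p2) Q = wp N p1 (wp N p2 Q)"
| "wp N (If e p1 p2) Q = (\<lambda>\<sigma>. (evalA N \<sigma> e \<and> wp N p1 Q \<sigma>) \<or> (\<not> evalA N \<sigma> e \<and> wp N p2 Q \<sigma>))"
| "wp N (While e I p') Q = (\<lambda>\<sigma>. evalA N \<sigma> I)"
| "wp N Skip Q = Q"

end

theory Submission
  imports Defs
begin

text \<open>By induction on the derivation of \<open>\<eta> \<leadsto>\<^sub>p E\<close>: if all states of \<open>E\<close> satisfy \<open>Q\<close>, then \<open>\<eta>\<close>
  satisfies \<open>wp(p, Q)\<close>, because each rule of the semantics mirrors one clause of the backward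
  strategy; for \<open>v+\<close> and \<open>v-\<close>, the formulas \<open>\<Phi>\<^sub>v\<^sup>+\<close> and \<open>\<Phi>\<^sub>v\<^sup>-\<close> say exactly that the step is a
  transition. The exception is a loop, whose precondition is its invariant, so every state from
  which a loop executes must satisfy the invariant. This follows from the weakest-invariant
  hypothesis applied to the triple \<open>{\<eta> = \<eta>\<^sub>0} w {true}\<close>, which holds whenever \<open>w\<close> executes from
  \<open>\<eta>\<^sub>0\<close>; the precondition is expressible because there are finitely many variables.\<close>

lemma PhiOmega_iff_rho:
  assumes "\<omega> \<subseteq> Ninv N v"
  shows "PhiOmega N v \<omega> \<sigma> \<longleftrightarrow> \<omega> = rho N \<sigma> v"
  using assms unfolding PhiOmega_def rho_def by auto

lemma PhiPlus_iff_less_Kval: "PhiPlus N v \<sigma> \<longleftrightarrow> \<sigma> v < Kval N \<sigma> v"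
  unfolding PhiPlus_def Kval_def by (auto simp: PhiOmega_iff_rho rho_def)

lemma PhiMinus_iff_greater_Kval: "PhiMinus N v \<sigma> \<longleftrightarrow> \<sigma> v > Kval N \<sigma> v"
  unfolding PhiMinus_def Kval_def by (auto simp: PhiOmega_iff_rho rho_def)

lemma transition_update_step:
  assumes "transition N \<eta> (\<eta>(v := x))" and "x \<noteq> \<eta> v"
  shows "\<eta> v \<noteq> Kval N \<eta> v \<and> x = (if \<eta> v < Kval N \<eta> v then \<eta> v + 1 else \<eta> v - 1)"
proof -
  have "\<eta>(v := x) \<noteq> \<eta>" using assms(2) by (metis fun_upd_same)
  with assms(1) obtain u where u: "\<eta> u \<noteq> Kval N \<eta> u"
    and upd: "\<eta>(v := x) = \<eta>(u := (if \<eta> u < Kval N \<eta> u then \<eta> u + 1 else \<eta> u - 1))"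
    unfolding transition_def by auto
  from upd have at_v: "x = (\<eta>(u := (if \<eta> u < Kval N \<eta> u then \<eta> u + 1 else \<eta> u - 1))) v"
    by (metis fun_upd_same)
  with assms(2) have "u = v" by (cases "u = v") auto
  with u at_v show ?thesis by simp
qed

lemma transition_increment_less_Kval:
  assumes "transition N \<eta> (\<eta>(v := \<eta> v + 1))"
  shows "\<eta> v < Kval N \<eta> v"
  using transition_update_step[OF assms] by (auto split: if_splits)

lemma transition_decrement_greater_Kval:
  assumes "transition N \<eta> (\<eta>(v := \<eta> v - 1))"
  shows "\<eta> v > Kval N \<eta> v"
  using transition_update_step[OF assms] by (auto split: if_splits)

lemma steps_source_in_States: "steps N \<eta> p E \<Longrightarrow> \<eta> \<in> States N"
  by (induction rule: steps.induct) auto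

lemma subprogs_refl: "p \<in> subprogs p"
  by (cases p) auto

definition loops_start_in_invariant :: "('v, 'm) grn \<Rightarrow> ('v, 'm) prog \<Rightarrow> bool" where
  "loops_start_in_invariant N p \<longleftrightarrow> (\<forall>e I p' \<eta> E. While e I p' \<in> subprogs p \<longrightarrow>
      steps N \<eta> (While e I p') E \<longrightarrow> evalA N \<eta> I)"

lemma loops_start_in_invariant_simps [simp]:
  "loops_start_in_invariant N (Seq p q) \<longleftrightarrow> loops_start_in_invariant N p \<and> loops_start_in_invariant N q"
  "loops_start_in_invariant N (If e p q) \<longleftrightarrow> loops_start_in_invariant N p \<and> loops_start_in_invariant N q"
  "loops_start_in_invariant N (All p q) \<longleftrightarrow> loops_start_in_invariant N p \<and> loops_start_in_invariant N q"
  "loops_start_in_invariant N (Ex p q) \<longleftrightarrow> loops_start_in_invariant N p \<and> loops_start_in_invariant N q"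
  unfolding loops_start_in_invariant_def by (simp; blast)+

lemma steps_imp_wp:
  assumes "steps N \<eta> p E" and "\<forall>\<eta>' \<in> E. Q \<eta>'" and "loops_start_in_invariant N p"
  shows "wp N p Q \<eta>"
  using assms
proof (induction arbitrary: Q rule: steps.induct)
  case (inc \<eta> v)
  then have "Q (\<eta>(v := \<eta> v + 1))" by blast
  with inc.hyps(2) show ?case by (simp add: PhiPlus_iff_less_Kval transition_increment_less_Kval)
next
  case (dec \<eta> v)
  then have "Q (\<eta>(v := \<eta> v - 1))" by blast
  with dec.hyps(2) show ?case by (simp add: PhiMinus_iff_greater_Kval transition_decrement_greater_Kval)
next
  case (while_true \<eta> e p0 I E)
  then have "steps N \<eta> (While e I p0) E" by (blast intro: steps.while_true)
  with while_true.prems(2) show ?case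
    by (auto simp: loops_start_in_invariant_def intro: subprogs_refl)
next
  case (while_false \<eta> e I p0)
  then have "steps N \<eta> (While e I p0) {\<eta>}" by (blast intro: steps.while_false)
  with while_false.prems(2) show ?case
    by (auto simp: loops_start_in_invariant_def intro: subprogs_refl)
qed auto

abbreviation ATrue :: "('v, 'm) assn" where
  "ATrue \<equiv> AEq (Num 0) (Num 0)"

fun agree_assn :: "'v val \<Rightarrow> 'v list \<Rightarrow> ('v, 'm) assn" where
  "agree_assn \<eta> [] = ATrue"
| "agree_assn \<eta> (v # vs) = AAnd (AEq (Var v) (Num (\<eta> v))) (agree_assn \<eta> vs)"

lemma wfA_agree_assn: "set vs \<subseteq> Vars N \<Longrightarrow> wfA N (agree_assn \<eta> vs)"
  by (induction vs) auto

lemma evalA_agree_assn: "evalA N \<sigma> (agree_assn \<eta> vs) \<longleftrightarrow> (\<forall>v \<in> set vs. \<sigma> v = \<eta> v)"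
  by (induction vs) auto

lemma States_eqI:
  assumes "\<sigma> \<in> States N" and "\<eta> \<in> States N" and "\<forall>v \<in> Vars N. \<sigma> v = \<eta> v"
  shows "\<sigma> = \<eta>"
  using assms unfolding States_def by (auto simp: fun_eq_iff)

lemma hoare_agree_assn:
  assumes "set vs = Vars N" and "steps N \<eta> p E"
  shows "hoare N (agree_assn \<eta> vs) p ATrue"
  unfolding hoare_def
proof (intro ballI impI)
  fix \<sigma> assume "\<sigma> \<in> States N" and "evalA N \<sigma> (agree_assn \<eta> vs)"
  then have "\<sigma> = \<eta>"
    using assms States_eqI steps_source_in_States by (metis evalA_agree_assn)
  with assms(2) show "\<exists>E. steps N \<sigma> p E \<and> (\<forall>\<sigma>' \<in> E. evalA N \<sigma>' ATrue)"
    by auto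
qed

definition weakest_invariants :: "('v, 'm) grn \<Rightarrow> ('v, 'm) prog \<Rightarrow> bool" where
  "weakest_invariants N p \<longleftrightarrow> (\<forall>e I p'. While e I p' \<in> subprogs p \<longrightarrow>
     (\<forall>P' Q'. wfA N P' \<longrightarrow> wfA N Q' \<longrightarrow> hoare N P' (While e I p') Q' \<longrightarrow>
        (\<forall>\<eta> \<in> States N. evalA N \<eta> P' \<longrightarrow> evalA N \<eta> I)))"

lemma weakest_invariants_imp_loops_start_in_invariant:
  fixes N :: "('v, 'm) grn"
  assumes "finite (Vars N)" and "weakest_invariants N p"
  shows "loops_start_in_invariant N p"
  unfolding loops_start_in_invariant_def
proof (intro allI impI)
  fix e I p' \<eta> E
  assume loop: "While e I p' \<in> subprogs p" and exec: "steps N \<eta> (While e I p') E"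
  obtain vs where vs: "set vs = Vars N" using finite_list assms(1) by blast
  have "hoare N (agree_assn \<eta> vs) (While e I p') ATrue"
    using vs exec by (rule hoare_agree_assn)
  moreover have "wfA N (agree_assn \<eta> vs :: ('v, 'm) assn)" and "wfA N (ATrue :: ('v, 'm) assn)"
    using vs by (simp_all add: wfA_agree_assn)
  ultimately have "\<forall>\<sigma> \<in> States N. evalA N \<sigma> (agree_assn \<eta> vs) \<longrightarrow> evalA N \<sigma> I"
    using assms(2) loop unfolding weakest_invariants_def by blast
  moreover have "\<eta> \<in> States N" using exec by (rule steps_source_in_States)
  ultimately show "evalA N \<eta> I" by (simp add: evalA_agree_assn)
qed

theorem mainTheorem2:
  fixes N :: "('v, 'm) grn" and P Q :: "('v, 'm) assn" and p :: "('v, 'm) prog"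
  assumes "is_grn N"
    and "wfA N P" and "wfA N Q" and "wf_prog N p"
    and "\<forall>e I p'. While e I p' \<in> subprogs p \<longrightarrow>
           (\<forall>P' Q'. wfA N P' \<longrightarrow> wfA N Q' \<longrightarrow> hoare N P' (While e I p') Q' \<longrightarrow>
              (\<forall>\<eta> \<in> States N. evalA N \<eta> P' \<longrightarrow> evalA N \<eta> I))"
    and "hoare N P p Q"
  shows "\<forall>\<eta> \<in> States N. evalA N \<eta> P \<longrightarrow> wp N p (\<lambda>\<sigma>. evalA N \<sigma> Q) \<eta>"
proof (intro ballI impI)
  fix \<eta> assume "\<eta> \<in> States N" and "evalA N \<eta> P"
  with assms(6) obtain E where "steps N \<eta> p E" and "\<forall>\<eta>' \<in> E. evalA N \<eta>' Q"
    unfolding hoare_def by blast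
  moreover have "loops_start_in_invariant N p"
  proof (rule weakest_invariants_imp_loops_start_in_invariant)
    show "finite (Vars N)" using assms(1) unfolding is_grn_def by simp
    show "weakest_invariants N p" using assms(5) unfolding weakest_invariants_def .
  qed
  ultimately show "wp N p (\<lambda>\<sigma>. evalA N \<sigma> Q) \<eta>" by (rule steps_imp_wp)
qed

end
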